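(* Let $f\neq 0$ and $\mu\in\mathbb{R}$. The curve $\left(x^2+y^2-\mu f x\right)^2=f^2(x^2+2y^2)$ (with the origin removed) is the image, under inversion with respect to the circle $x^2+y^2=f^2$, of the conic $$2y^2+(1-\mu^2)x^2+2\mu f x-f^2=0,$$ which has eccentricity $e=\sqrt{(\mu^2+1)/2}$, focal parameter $p=f/2$, and foci at the points $\left(\dfrac{f}{2(\mu\pm e)},0\right)$.
   Context: Inversion with respect to the circle $x^2+y^2=f^2$ maps a point $P\neq 0$ to $f^2P/|P|^2$. *)

theory Defs
  imports "HOL-Analysis.Analysis"
begin

text \<open>Points of the plane are pairs (x, y) of reals; norm and dist on real \<times> real are Euclidean.\<close>

definition inversion :: "real \<Rightarrow> real \<times> real \<Rightarrow> real \<times> real" where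
  "inversion f P = (f\<^sup>2 / (norm P)\<^sup>2) *\<^sub>R P"

definition conic :: "real \<Rightarrow> real \<Rightarrow> (real \<times> real) set" where
  "conic \<mu> f = {(x, y). 2 * y\<^sup>2 + (1 - \<mu>\<^sup>2) * x\<^sup>2 + 2 * \<mu> * f * x - f\<^sup>2 = 0}"

definition curve :: "real \<Rightarrow> real \<Rightarrow> (real \<times> real) set" where
  "curve \<mu> f = {(x, y). (x, y) \<noteq> (0, 0) \<and> (x\<^sup>2 + y\<^sup>2 - \<mu> * f * x)\<^sup>2 = f\<^sup>2 * (x\<^sup>2 + 2 * y\<^sup>2)}"

definition line_dist :: "real \<times> real \<Rightarrow> real \<Rightarrow> real \<times> real \<Rightarrow> real" where
  "line_dist a b P = \<bar>fst a * fst P + snd a * snd P - b\<bar> / norm a"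

definition fd_locus :: "real \<Rightarrow> real \<times> real \<Rightarrow> real \<times> real \<Rightarrow> real \<Rightarrow> (real \<times> real) set" where
  "fd_locus e F a b = {P. dist P F = e * line_dist a b P}"

end

theory Submission
  imports Defs
begin

text \<open>Inversion is an involution of the plane fixing 0, so the image of the conic is its
  preimage. Substituting the inverted point into the equation of the conic and clearing the
  factor f^2 / (x^2 + y^2)^2 gives, up to sign, the quartic defining the curve. For the focal
  description, take the focus (c, 0) and the directrix x = d: the locus
  (x - c)^2 + y^2 = e^2 (x - d)^2 has leading coefficient 1 - e^2 = (1 - \<mu>^2) / 2 in x, and
  c, d are forced by matching the remaining coefficients; this works because
  s = \<mu> \<plusminus> e is a root of s^2 \<mp> 2 e s + 1 - e^2 = 0.\<close>

lemma inversion_0 [simp]: "inversion f 0 = 0"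
  by (simp add: inversion_def)

lemma inversion_inversion:
  assumes "f \<noteq> 0"
  shows "inversion f (inversion f P) = P"
proof (cases "P = 0")
  case False
  then have "norm (inversion f P) = f\<^sup>2 / norm P"
    by (simp add: inversion_def power2_eq_square)
  with False assms show ?thesis
    by (simp add: inversion_def power2_eq_square)
qed simp

lemma image_inversion_eq_vimage:
  assumes "f \<noteq> 0"
  shows "inversion f ` S = inversion f -` S"
  using inversion_inversion[OF assms] by (auto simp: image_iff) metis

lemma inversion_Pair:
  "inversion f (x, y) = (f\<^sup>2 * x / (x\<^sup>2 + y\<^sup>2), f\<^sup>2 * y / (x\<^sup>2 + y\<^sup>2))"
  by (simp add: inversion_def norm_Pair)

lemma inversion_mem_conic_iff:
  assumes "f \<noteq> 0"
  shows "inversion f Q \<in> conic \<mu> f \<longleftrightarrow> Q \<in> curve \<mu> f"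
proof -
  obtain x y where Q: "Q = (x, y)"
    by fastforce
  show ?thesis
  proof (cases "Q = 0")
    case True
    then show ?thesis
      using assms by (simp add: Q inversion_Pair conic_def curve_def zero_prod_def)
  next
    case False
    define r where "r = x\<^sup>2 + y\<^sup>2"
    have "r \<noteq> 0"
      using False Q by (simp add: r_def zero_prod_def)
    let ?conic = "2 * (f\<^sup>2 * y / r)\<^sup>2 + (1 - \<mu>\<^sup>2) * (f\<^sup>2 * x / r)\<^sup>2 + 2 * \<mu> * f * (f\<^sup>2 * x / r) - f\<^sup>2"
    let ?curve = "(r - \<mu> * f * x)\<^sup>2 - f\<^sup>2 * (x\<^sup>2 + 2 * y\<^sup>2)"
    have conic: "inversion f Q \<in> conic \<mu> f \<longleftrightarrow> ?conic = 0"
      by (simp add: Q inversion_Pair conic_def flip: r_def)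
    have curve: "Q \<in> curve \<mu> f \<longleftrightarrow> ?curve = 0"
      using False by (simp add: Q curve_def zero_prod_def flip: r_def)
    have "?conic * r\<^sup>2 = f\<^sup>2 * (2 * f\<^sup>2 * y\<^sup>2 + (1 - \<mu>\<^sup>2) * f\<^sup>2 * x\<^sup>2 + 2 * \<mu> * f * x * r - r\<^sup>2)"
      using \<open>r \<noteq> 0\<close> by (simp add: field_simps power2_eq_square)
    also have "\<dots> = - f\<^sup>2 * ?curve"
      by (simp add: power2_eq_square algebra_simps)
    finally have "?conic * r\<^sup>2 = - f\<^sup>2 * ?curve" .
    then have "?conic = 0 \<longleftrightarrow> ?curve = 0"
      using \<open>r \<noteq> 0\<close> assms by (metis mult_eq_0_iff neg_equal_0_iff_equal zero_eq_power2)
    with conic curve show ?thesis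
      by simp
  qed
qed

lemma image_inversion_conic:
  assumes "f \<noteq> 0"
  shows "inversion f ` conic \<mu> f = curve \<mu> f"
  by (simp add: image_inversion_eq_vimage[OF assms] set_eq_iff inversion_mem_conic_iff[OF assms])

lemma mem_fd_locus_horizontal_iff:
  assumes "0 \<le> e"
  shows "(x, y) \<in> fd_locus e (c, 0) (1, 0) d \<longleftrightarrow> (x - c)\<^sup>2 + y\<^sup>2 = e\<^sup>2 * (x - d)\<^sup>2"
proof -
  have "(x, y) \<in> fd_locus e (c, 0) (1, 0) d \<longleftrightarrow> sqrt ((x - c)\<^sup>2 + y\<^sup>2) = e * \<bar>x - d\<bar>"
    by (simp add: fd_locus_def line_dist_def dist_Pair_Pair dist_real_def)
  also have "\<dots> \<longleftrightarrow> (x - c)\<^sup>2 + y\<^sup>2 = (e * \<bar>x - d\<bar>)\<^sup>2"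
  proof -
    have "0 \<le> (x - c)\<^sup>2 + y\<^sup>2" "0 \<le> e * \<bar>x - d\<bar>"
      using assms by simp_all
    then show ?thesis
      by (metis real_sqrt_unique real_sqrt_pow2)
  qed
  finally show ?thesis
    by (simp add: power_mult_distrib)
qed

lemma focus_directrix_equation_eq_conic_equation:
  fixes \<mu> e \<sigma> f s c d x y :: real
  assumes "2 * e\<^sup>2 = \<mu>\<^sup>2 + 1" "\<sigma>\<^sup>2 = 1" "s = \<mu> + \<sigma> * e"
    and "2 * s * c = f" "2 * e * (d - c) = \<sigma> * f"
  shows "2 * ((x - c)\<^sup>2 + y\<^sup>2 - e\<^sup>2 * (x - d)\<^sup>2)
    = 2 * y\<^sup>2 + (1 - \<mu>\<^sup>2) * x\<^sup>2 + 2 * \<mu> * f * x - f\<^sup>2"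
  using assms by algebra

lemma conic_eq_fd_locus:
  fixes e \<mu> \<sigma> f :: real
  assumes "2 * e\<^sup>2 = \<mu>\<^sup>2 + 1" "0 \<le> e" "\<sigma>\<^sup>2 = 1" "\<mu> + \<sigma> * e \<noteq> 0"
  defines "c \<equiv> f / (2 * (\<mu> + \<sigma> * e))"
  shows "conic \<mu> f = fd_locus e (c, 0) (1, 0) (c + \<sigma> * f / (2 * e))"
proof -
  define s where "s = \<mu> + \<sigma> * e"
  define d where "d = c + \<sigma> * f / (2 * e)"
  have "0 < \<mu>\<^sup>2 + 1"
    by (rule add_nonneg_pos) simp_all
  with assms(1) have "e \<noteq> 0"
    by auto
  have "2 * s * c = f" "2 * e * (d - c) = \<sigma> * f"
    using assms(4) \<open>e \<noteq> 0\<close> by (simp_all add: s_def c_def d_def)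
  note identity = focus_directrix_equation_eq_conic_equation[OF assms(1,3) s_def this]
  have "(x, y) \<in> fd_locus e (c, 0) (1, 0) d \<longleftrightarrow> (x, y) \<in> conic \<mu> f" for x y
  proof -
    have "(x, y) \<in> fd_locus e (c, 0) (1, 0) d
        \<longleftrightarrow> 2 * ((x - c)\<^sup>2 + y\<^sup>2 - e\<^sup>2 * (x - d)\<^sup>2) = 0"
      using assms(2) by (simp add: mem_fd_locus_horizontal_iff) linarith
    then show ?thesis
      unfolding identity by (simp add: conic_def)
  qed
  then show ?thesis
    by (simp add: set_eq_iff split_paired_all flip: d_def)
qed

lemma focus_directrix_distance:
  assumes "0 < e" "\<sigma>\<^sup>2 = 1"
  shows "e * line_dist (1, 0) (c + \<sigma> * f / (2 * e)) (c, 0) = \<bar>f\<bar> / 2"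
proof -
  have "\<bar>\<sigma>\<bar> = 1"
    using assms(2) by (simp add: abs_square_eq_1)
  with assms(1) show ?thesis
    by (simp add: line_dist_def abs_mult)
qed

theorem mainTheorem2:
  fixes f \<mu> e :: real
  assumes "f \<noteq> 0"
    and "e = sqrt ((\<mu>\<^sup>2 + 1) / 2)"
  shows "inversion f ` conic \<mu> f = curve \<mu> f
    \<and> (\<forall>\<sigma> \<in> {1, -1::real}. \<mu> + \<sigma> * e \<noteq> 0 \<longrightarrow>
         (\<exists>a b. a \<noteq> 0
            \<and> conic \<mu> f = fd_locus e (f / (2 * (\<mu> + \<sigma> * e)), 0) a b
            \<and> e * line_dist a b (f / (2 * (\<mu> + \<sigma> * e)), 0) = \<bar>f\<bar> / 2))"
proof (intro conjI ballI impI)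
  show "inversion f ` conic \<mu> f = curve \<mu> f"
    using assms(1) by (rule image_inversion_conic)
next
  fix \<sigma> :: real
  assume "\<sigma> \<in> {1, -1}" and nonzero: "\<mu> + \<sigma> * e \<noteq> 0"
  then have "\<sigma>\<^sup>2 = 1"
    by auto
  have "0 < \<mu>\<^sup>2 + 1"
    by (rule add_nonneg_pos) simp_all
  then have "0 < e" "2 * e\<^sup>2 = \<mu>\<^sup>2 + 1"
    using assms(2) by simp_all
  note focal_description =
    conic_eq_fd_locus[OF \<open>2 * e\<^sup>2 = \<mu>\<^sup>2 + 1\<close> less_imp_le[OF \<open>0 < e\<close>] \<open>\<sigma>\<^sup>2 = 1\<close> nonzero]
    focus_directrix_distance[OF \<open>0 < e\<close> \<open>\<sigma>\<^sup>2 = 1\<close>]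
  show "\<exists>a b. a \<noteq> 0
      \<and> conic \<mu> f = fd_locus e (f / (2 * (\<mu> + \<sigma> * e)), 0) a b
      \<and> e * line_dist a b (f / (2 * (\<mu> + \<sigma> * e)), 0) = \<bar>f\<bar> / 2"
  proof (intro exI conjI)
    show "(1::real, 0::real) \<noteq> 0"
      by (simp add: zero_prod_def)
  qed (fact focal_description)+
qed

end
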